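(* Let $m,n$ be positive integers and let $A=(A(i_1,\dots,i_{2m}))_{1\le i_1,\dots,i_{2m}\le n}$ be any array. Define the array $B=(B(i_1,\dots,i_{2m}))_{1\le i_1,\dots,i_{2m}\le 2n}$ as follows: if for every $1\le s\le m$ exactly one of $i_{2s-1},i_{2s}$ is odd, write the odd one as $2p_s-1$ and the even one as $2q_s$ ($1\le p_s,q_s\le n$) and set $B(i_1,\dots,i_{2m})=(-1)^{k}A(p_1,q_1,\dots,p_m,q_m)$, where $k$ is the number of $s$ with $i_{2s-1}$ even; otherwise set $B(i_1,\dots,i_{2m})=0$. Then $B$ satisfies the alternation condition below and $\mathrm{Pf}^{[2m]}(B)=\mathrm{Det}^{[2m]}(A)$.
   Context: Hyperdeterminant: for an array $A$ indexed by $\{1,\dots,n\}^{2m}$, $\mathrm{Det}^{[2m]}(A):=\frac{1}{n!}\sum_{\sigma_1,\dots,\sigma_{2m}\in\mathfrak{S}_n}\mathrm{sgn}(\sigma_1)\cdots\mathrm{sgn}(\sigma_{2m})\prod_{i=1}^nA(\sigma_1(i),\dots,\sigma_{2m}(i)).$ Alternation condition: an array $B$ indexed by $\{1,\dots,2n\}^{2m}$ satisfies it if, for each $1\le s\le m$, interchanging the arguments $i_{2s-1}$ and $i_{2s}$ multiplies $B(i_1,\dots,i_{2m})$ by $-1$. Hyperpfaffian of such $B$: with $\mathfrak{E}_{2n}=\{\sigma\in\mathfrak{S}_{2n}:\sigma(2i-1)<\sigma(2i),\ 1\le i\le n\}$, $$\mathrm{Pf}^{[2m]}(B):=\frac{1}{n!}\sum_{\sigma_1,\dots,\sigma_m\in\mathfrak{E}_{2n}}\mathrm{sgn}(\sigma_1)\cdots\mathrm{sgn}(\sigma_m)\prod_{i=1}^nB(\sigma_1(2i-1),\sigma_1(2i),\dots,\sigma_m(2i-1),\sigma_m(2i)).$$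 *)

theory Defs
  imports "HOL-Combinatorics.Permutations"
begin

text \<open>An array indexed by \<open>{1..n}^(2m)\<close> is modelled as a function on index lists;
  the list \<open>[i_1, ..., i_{2m}]\<close> (0-based list positions) is the index tuple.
  Only lists of length \<open>2m\<close> with entries in \<open>{1..n}\<close> are relevant.\<close>

definition hyperdet :: "nat \<Rightarrow> nat \<Rightarrow> (nat list \<Rightarrow> 'a::field_char_0) \<Rightarrow> 'a" where
  "hyperdet m n A =
     (1 / fact n) *
     (\<Sum>\<sigma> \<in> PiE {1..2*m} (\<lambda>_. {p. p permutes {1..n}}).
        (\<Prod>j=1..2*m. of_int (sign (\<sigma> j))) *
        (\<Prod>i=1..n. A (map (\<lambda>j. \<sigma> j i) [1..<2*m+1])))"

definition evenperms :: "nat \<Rightarrow> (nat \<Rightarrow> nat) set" where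
  "evenperms n = {\<sigma>. \<sigma> permutes {1..2*n} \<and> (\<forall>i\<in>{1..n}. \<sigma> (2*i-1) < \<sigma> (2*i))}"

definition alternation_cond :: "nat \<Rightarrow> nat \<Rightarrow> (nat list \<Rightarrow> 'a::ab_group_add) \<Rightarrow> bool" where
  "alternation_cond m n B \<longleftrightarrow>
     (\<forall>l. length l = 2*m \<longrightarrow> set l \<subseteq> {1..2*n} \<longrightarrow>
        (\<forall>s\<in>{1..m}. B (l[2*s-2 := l!(2*s-1), 2*s-1 := l!(2*s-2)]) = - B l))"

definition hyperpf :: "nat \<Rightarrow> nat \<Rightarrow> (nat list \<Rightarrow> 'a::field_char_0) \<Rightarrow> 'a" where
  "hyperpf m n B =
     (1 / fact n) *
     (\<Sum>\<sigma> \<in> PiE {1..m} (\<lambda>_. evenperms n).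
        (\<Prod>s=1..m. of_int (sign (\<sigma> s))) *
        (\<Prod>i=1..n. B (concat (map (\<lambda>s. [\<sigma> s (2*i-1), \<sigma> s (2*i)]) [1..<m+1]))))"

text \<open>The array B built from A (list positions 2(s-1), 2(s-1)+1 hold i_{2s-1}, i_{2s}).\<close>
definition pf_array :: "nat \<Rightarrow> (nat list \<Rightarrow> 'a::comm_ring_1) \<Rightarrow> nat list \<Rightarrow> 'a" where
  "pf_array m A l =
     (if \<forall>s<m. odd (l!(2*s)) \<noteq> odd (l!(2*s+1)) then
        (-1) ^ card {s. s < m \<and> even (l!(2*s))} *
        A (concat (map (\<lambda>s. let a = l!(2*s); b = l!(2*s+1) in
                              if odd a then [(a+1) div 2, b div 2] else [(b+1) div 2, a div 2])
                      [0..<m]))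
      else 0)"

end

theory Submission
  imports Defs
begin

(* Only the terms of the hyperpfaffian in which every sigma_s sends each pair of positions
   {2i - 1, 2i} to a pair of values of different parity survive, since B vanishes elsewhere.
   Such a sigma in E_2n is the same thing as a pair (p, q) of permutations of {1..n}: the pair at
   positions 2i - 1, 2i is {2 p(i) - 1, 2 q(i)} in increasing order.  Its sign is
   sgn p * sgn q * (-1)^k, where k counts the i with q(i) < p(i), i.e. the pairs whose even value
   comes first; and (-1)^k is exactly the sign with which B reproduces A on these arguments.
   Hence the surviving terms of the hyperpfaffian are the terms of the hyperdeterminant indexed by
   (p_1, q_1, ..., p_m, q_m).  Alternation holds because swapping the two arguments of a pair does
   not change the argument of A and flips one sign. *)

section \<open>Merging two permutations of {1..n} into one of {1..2n}\<close>

lemma map_permutation_outside: "x \<notin> f ` A \<Longrightarrow> map_permutation A f p x = x"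
  by (simp add: map_permutation_def)

lemma map_permutation_permutes_superset:
  assumes "inj_on f A" "p permutes A" "f ` A \<subseteq> B"
  shows "map_permutation A f p permutes B"
  using map_permutation_permutes[OF inj_on_imp_bij_betw[OF assms(1)] assms(2)] assms(3)
  by (rule permutes_subset)

lemma inj_on_odd_embedding: "inj_on (\<lambda>i::nat. 2*i - 1) {1..n}"
  by (auto simp: inj_on_def)

lemma inj_on_even_embedding: "inj_on (\<lambda>i::nat. 2*i) A"
  by (auto simp: inj_on_def)

definition interleave :: "nat \<Rightarrow> (nat \<Rightarrow> nat) \<Rightarrow> (nat \<Rightarrow> nat) \<Rightarrow> nat \<Rightarrow> nat" where
  "interleave n p q =
     map_permutation {1..n} (\<lambda>i. 2*i - 1) p \<circ> map_permutation {1..n} (\<lambda>i. 2*i) q"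

lemma interleave_odd:
  assumes "i \<in> {1..n}"
  shows "interleave n p q (2*i - 1) = 2 * p i - 1"
proof -
  have "map_permutation {1..n} (\<lambda>i. 2*i) q (2*i - 1) = 2*i - 1"
    by (rule map_permutation_outside) (auto, presburger)
  then show ?thesis
    unfolding interleave_def comp_apply
    by (simp only: map_permutation_apply[OF inj_on_odd_embedding assms])
qed

lemma interleave_even:
  assumes "i \<in> {1..n}"
  shows "interleave n p q (2*i) = 2 * q i"
  unfolding interleave_def comp_apply map_permutation_apply[OF inj_on_even_embedding assms]
  by (rule map_permutation_outside) (auto, presburger)

lemma interleave_permutes:
  assumes "p permutes {1..n}" "q permutes {1..n}"
  shows "interleave n p q permutes {1..2*n}"
  unfolding interleave_def
  by (intro permutes_compose map_permutation_permutes_superset assms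
        inj_on_odd_embedding inj_on_even_embedding) auto

lemma sign_interleave:
  assumes p: "p permutes {1..n}" and q: "q permutes {1..n}"
  shows "sign (interleave n p q) = sign p * sign q"
proof -
  have perm: "permutation (map_permutation {1..n} f r)"
    if "inj_on f {1..n}" "f ` {1..n} \<subseteq> {1..2*n}" "r permutes {1..n}" for f r
    by (rule permutes_imp_permutation[OF _ map_permutation_permutes_superset[OF that(1,3,2)]]) simp
  have "sign (interleave n p q) =
      sign (map_permutation {1..n} (\<lambda>i. 2*i - 1) p) * sign (map_permutation {1..n} (\<lambda>i. 2*i) q)"
    unfolding interleave_def
    by (intro sign_compose perm p q inj_on_odd_embedding inj_on_even_embedding) auto
  also have "\<dots> = sign p * sign q"
    by (simp only: sign_map_permutation[OF inj_on_odd_embedding p finite_atLeastAtMost]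
                   sign_map_permutation[OF inj_on_even_embedding q finite_atLeastAtMost])
  finally show ?thesis .
qed

definition swap_pairs :: "nat set \<Rightarrow> nat \<Rightarrow> nat" where
  "swap_pairs K x = (if (x+1) div 2 \<in> K then if odd x then x+1 else x-1 else x)"

lemma swap_pairs_empty: "swap_pairs {} = id"
  by (simp add: fun_eq_iff swap_pairs_def)

lemma swap_pairs_insert:
  assumes "0 < k" "k \<notin> K"
  shows "swap_pairs (insert k K) = transpose (2*k - 1) (2*k) \<circ> swap_pairs K"
  using assms by (auto simp: fun_eq_iff swap_pairs_def transpose_def elim!: oddE evenE) presburger+

lemma swap_pairs_permutes:
  assumes "K \<subseteq> {1..n}"
  shows "swap_pairs K permutes {1..2*n}"
  using finite_subset[OF assms finite_atLeastAtMost] assms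
proof (induction K rule: finite_subset_induct)
  case empty
  show ?case unfolding swap_pairs_empty by (rule permutes_id)
next
  case (insert k K)
  then have "0 < k" by simp
  show ?case
    unfolding swap_pairs_insert[OF \<open>0 < k\<close> \<open>k \<notin> K\<close>]
    by (rule permutes_compose[OF insert.IH permutes_swap_id]) (use insert in auto)
qed

lemma sign_swap_pairs:
  assumes "K \<subseteq> {1..n}"
  shows "sign (swap_pairs K) = (-1) ^ card K"
  using finite_subset[OF assms finite_atLeastAtMost] assms
proof (induction K rule: finite_subset_induct')
  case empty
  then show ?case by (simp add: swap_pairs_empty)
next
  case (insert k K)
  then have "0 < k" "2*k - 1 \<noteq> 2*k" by auto
  have "permutation (swap_pairs K)"
    using swap_pairs_permutes[OF \<open>K \<subseteq> {1..n}\<close>] by (rule permutes_imp_permutation[rotated]) simp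
  then have "sign (swap_pairs (insert k K)) = - sign (swap_pairs K)"
    unfolding swap_pairs_insert[OF \<open>0 < k\<close> \<open>k \<notin> K\<close>]
    using \<open>2*k - 1 \<noteq> 2*k\<close> by (simp add: sign_compose permutation_swap_id sign_swap_id)
  then show ?case
    using insert by simp
qed

lemma swap_pairs_odd: "0 < i \<Longrightarrow> swap_pairs K (2*i - 1) = (if i \<in> K then 2*i else 2*i - 1)"
  by (auto simp: swap_pairs_def)

lemma swap_pairs_even: "0 < i \<Longrightarrow> swap_pairs K (2*i) = (if i \<in> K then 2*i - 1 else 2*i)"
  by (auto simp: swap_pairs_def)

lemma pair_index_cases:
  fixes x n :: nat
  assumes "x \<in> {1..2*n}"
  obtains (odd) i where "i \<in> {1..n}" "x = 2*i - 1" | (even) i where "i \<in> {1..n}" "x = 2*i"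
proof (cases "odd x")
  case True
  then obtain j where "x = 2*j + 1" by (auto elim: oddE)
  then show ?thesis using odd[of "j+1"] assms by auto
next
  case False
  then obtain j where "x = 2*j" by (auto elim: evenE)
  then show ?thesis using even[of j] assms by auto
qed

text \<open>\<open>merge_perm n p q\<close> sends the positions \<open>2 * i - 1\<close>, \<open>2 * i\<close> to the values
  \<open>2 * p i - 1\<close>, \<open>2 * q i\<close> in increasing order.\<close>

definition merge_perm :: "nat \<Rightarrow> (nat \<Rightarrow> nat) \<Rightarrow> (nat \<Rightarrow> nat) \<Rightarrow> nat \<Rightarrow> nat" where
  "merge_perm n p q = interleave n p q \<circ> swap_pairs {i \<in> {1..n}. q i < p i}"

lemma merge_perm_odd:
  assumes "i \<in> {1..n}"
  shows "merge_perm n p q (2*i - 1) = (if q i < p i then 2 * q i else 2 * p i - 1)"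
proof -
  have "0 < i" using assms by simp
  then show ?thesis
    unfolding merge_perm_def comp_apply swap_pairs_odd[OF \<open>0 < i\<close>] mem_Collect_eq
    by (simp only: if_distrib[of "interleave n p q"] interleave_odd[OF assms]
                   interleave_even[OF assms] assms simp_thms)
qed

lemma merge_perm_even:
  assumes "i \<in> {1..n}"
  shows "merge_perm n p q (2*i) = (if q i < p i then 2 * p i - 1 else 2 * q i)"
proof -
  have "0 < i" using assms by simp
  then show ?thesis
    unfolding merge_perm_def comp_apply swap_pairs_even[OF \<open>0 < i\<close>] mem_Collect_eq
    by (simp only: if_distrib[of "interleave n p q"] interleave_odd[OF assms]
                   interleave_even[OF assms] assms simp_thms)
qed

lemma merge_perm_permutes:
  assumes "p permutes {1..n}" "q permutes {1..n}"
  shows "merge_perm n p q permutes {1..2*n}"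
  unfolding merge_perm_def
  by (intro permutes_compose swap_pairs_permutes interleave_permutes assms) auto

lemma sign_merge_perm:
  assumes "p permutes {1..n}" "q permutes {1..n}"
  shows "sign (merge_perm n p q) = sign p * sign q * (-1) ^ card {i \<in> {1..n}. q i < p i}"
proof -
  let ?K = "{i \<in> {1..n}. q i < p i}"
  have K: "?K \<subseteq> {1..n}" by auto
  have perms: "permutation (interleave n p q)" "permutation (swap_pairs ?K)"
    using interleave_permutes[OF assms] swap_pairs_permutes[OF K]
    by (auto intro: permutes_imp_permutation[rotated])
  show ?thesis
    unfolding merge_perm_def sign_compose[OF perms] sign_interleave[OF assms] sign_swap_pairs[OF K]
    ..
qed

lemma sign_merge_perm_cancel:
  assumes "p permutes {1..n}" "q permutes {1..n}"
  shows "of_int (sign (merge_perm n p q)) * (\<Prod>i=1..n. if q i < p i then -1 else 1) =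
    (of_int (sign p) * of_int (sign q) :: 'a::comm_ring_1)"
proof -
  have "(\<Prod>i=1..n. if q i < p i then -1 else (1::'a)) = (\<Prod>i\<in>{i \<in> {1..n}. q i < p i}. -1)"
    by (rule prod.inter_filter[symmetric]) simp
  then show ?thesis
    by (simp add: sign_merge_perm[OF assms] mult.assoc)
qed

section \<open>Permutations with pairs of mixed parity\<close>

text \<open>For \<open>a\<close>, \<open>b\<close> of different parity, \<open>pair_labels a b = [p, q]\<close> with
  \<open>{a, b} = {2 * p - 1, 2 * q}\<close>; this is how \<^const>\<open>pf_array\<close> turns a pair of arguments of
  \<open>B\<close> into a pair of arguments of \<open>A\<close>.\<close>

definition pair_labels :: "nat \<Rightarrow> nat \<Rightarrow> nat list" where
  "pair_labels a b = (if odd a then [(a+1) div 2, b div 2] else [(b+1) div 2, a div 2])"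

definition mixed_parity :: "nat \<Rightarrow> (nat \<Rightarrow> nat) \<Rightarrow> bool" where
  "mixed_parity n s \<longleftrightarrow> (\<forall>i\<in>{1..n}. odd (s (2*i - 1)) \<noteq> odd (s (2*i)))"

lemma pair_labels_swap: "odd a \<noteq> odd b \<Longrightarrow> pair_labels b a = pair_labels a b"
  by (auto simp: pair_labels_def)

lemma pair_labels_mixed:
  assumes "odd a \<noteq> odd b" "a \<in> {1..2*n}" "b \<in> {1..2*n}"
  shows "{a, b} = {2 * hd (pair_labels a b) - 1, 2 * last (pair_labels a b)}"
    and "hd (pair_labels a b) \<in> {1..n}" and "last (pair_labels a b) \<in> {1..n}"
proof -
  from assms(1) consider "odd a" "even b" | "even a" "odd b" by blast
  then have "{a, b} = {2 * hd (pair_labels a b) - 1, 2 * last (pair_labels a b)} \<and>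
      hd (pair_labels a b) \<in> {1..n} \<and> last (pair_labels a b) \<in> {1..n}"
  proof cases
    case 1
    obtain k where "a = 2*k + 1" using 1(1) by (rule oddE)
    moreover obtain l where "b = 2*l" using 1(2) by (rule evenE)
    ultimately show ?thesis using assms(2,3) by (simp add: pair_labels_def)
  next
    case 2
    obtain l where "a = 2*l" using 2(1) by (rule evenE)
    moreover obtain k where "b = 2*k + 1" using 2(2) by (rule oddE)
    ultimately show ?thesis using assms(2,3) by (simp add: pair_labels_def insert_commute)
  qed
  then show "{a, b} = {2 * hd (pair_labels a b) - 1, 2 * last (pair_labels a b)}"
    and "hd (pair_labels a b) \<in> {1..n}" and "last (pair_labels a b) \<in> {1..n}"
    by blast+
qed

lemma permutes_atLeastAtMost_pos: "(p :: nat \<Rightarrow> nat) permutes {1..n} \<Longrightarrow> i \<in> {1..n} \<Longrightarrow> 0 < p i"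
  using permutes_in_image[of p "{1..n}" i] by auto

lemma merge_perm_pair:
  assumes "i \<in> {1..n}" "0 < p i"
  shows "merge_perm n p q (2*i - 1) < merge_perm n p q (2*i)"
    and "even (merge_perm n p q (2*i - 1)) \<longleftrightarrow> q i < p i"
    and "odd (merge_perm n p q (2*i - 1)) \<noteq> odd (merge_perm n p q (2*i))"
    and "pair_labels (merge_perm n p q (2*i - 1)) (merge_perm n p q (2*i)) = [p i, q i]"
  unfolding merge_perm_odd[OF assms(1)] merge_perm_even[OF assms(1)]
  using assms(2) by (auto simp: pair_labels_def)

lemma merge_perm_in_evenperms:
  assumes "p permutes {1..n}" "q permutes {1..n}"
  shows "merge_perm n p q \<in> evenperms n"
  unfolding evenperms_def
  using merge_perm_permutes[OF assms] merge_perm_pair(1) permutes_atLeastAtMost_pos[OF assms(1)]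
  by blast

lemma merge_perm_inject:
  assumes "p permutes {1..n}" "q permutes {1..n}" "p' permutes {1..n}" "q' permutes {1..n}"
    and "merge_perm n p q = merge_perm n p' q'"
  shows "p = p' \<and> q = q'"
proof -
  have "p i = p' i \<and> q i = q' i" for i
  proof (cases "i \<in> {1..n}")
    case True
    then show ?thesis
      using merge_perm_pair(4)[of i n p q] merge_perm_pair(4)[of i n p' q']
        permutes_atLeastAtMost_pos[OF assms(1) True] permutes_atLeastAtMost_pos[OF assms(3) True]
      by (simp add: assms(5))
  next
    case False
    then show ?thesis using assms(1-4) by (simp add: permutes_not_in)
  qed
  then show ?thesis by auto
qed

lemma block_labels_permutes:
  fixes s g h :: "nat \<Rightarrow> nat"
  assumes "inj s"
    and labels: "\<And>i. i \<in> {1..n} \<Longrightarrow> g i \<in> {1..n} \<and> h (g i) \<in> s ` {2*i - 1, 2*i}"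
    and "\<And>i. i \<notin> {1..n} \<Longrightarrow> g i = i"
  shows "g permutes {1..n}"
proof (rule bij_imp_permutes[OF _ assms(3)])
  have "inj_on g {1..n}"
  proof (rule inj_onI)
    fix i j assume ij: "i \<in> {1..n}" "j \<in> {1..n}" "g i = g j"
    obtain x where x: "x \<in> {2*i - 1, 2*i}" "h (g i) = s x"
      using labels[OF ij(1)] by blast
    obtain y where y: "y \<in> {2*j - 1, 2*j}" "h (g j) = s y"
      using labels[OF ij(2)] by blast
    have "x = y" using x(2) y(2) ij(3) \<open>inj s\<close> by (simp add: inj_eq)
    then show "i = j" using x y ij by auto
  qed
  moreover have "g ` {1..n} \<subseteq> {1..n}" using labels by auto
  ultimately show "bij_betw g {1..n} {1..n}"
    by (simp add: bij_betw_def endo_inj_surj)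
qed

definition odd_label :: "nat \<Rightarrow> (nat \<Rightarrow> nat) \<Rightarrow> nat \<Rightarrow> nat" where
  "odd_label n s i = (if i \<in> {1..n} then hd (pair_labels (s (2*i - 1)) (s (2*i))) else i)"

definition even_label :: "nat \<Rightarrow> (nat \<Rightarrow> nat) \<Rightarrow> nat \<Rightarrow> nat" where
  "even_label n s i = (if i \<in> {1..n} then last (pair_labels (s (2*i - 1)) (s (2*i))) else i)"

lemma entries_eq_labels:
  assumes "s permutes {1..2*n}" "mixed_parity n s" "i \<in> {1..n}"
  shows "{s (2*i - 1), s (2*i)} = {2 * odd_label n s i - 1, 2 * even_label n s i}"
    and "odd_label n s i \<in> {1..n}" and "even_label n s i \<in> {1..n}"
proof -
  have "2*i - 1 \<in> {1..2*n}" "2*i \<in> {1..2*n}" using assms(3) by auto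
  then have range: "s (2*i - 1) \<in> {1..2*n}" "s (2*i) \<in> {1..2*n}"
    by (simp_all only: permutes_in_image[OF assms(1)])
  have "odd (s (2*i - 1)) \<noteq> odd (s (2*i))"
    using assms(2,3) by (simp add: mixed_parity_def)
  note labels = pair_labels_mixed[OF this range]
  show "{s (2*i - 1), s (2*i)} = {2 * odd_label n s i - 1, 2 * even_label n s i}"
    and "odd_label n s i \<in> {1..n}" and "even_label n s i \<in> {1..n}"
    unfolding odd_label_def even_label_def if_P[OF assms(3)] by (fact labels)+
qed

lemma labels_permute:
  assumes s: "s permutes {1..2*n}" and "mixed_parity n s"
  shows "odd_label n s permutes {1..n}" "even_label n s permutes {1..n}"
proof -
  have inj: "inj s" using s by (rule permutes_inj)
  note entries = entries_eq_labels[OF assms]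
  show "odd_label n s permutes {1..n}"
  proof (rule block_labels_permutes[OF inj, where h = "\<lambda>v. 2*v - 1"])
    fix i assume "i \<in> {1..n}"
    then show "odd_label n s i \<in> {1..n} \<and> 2 * odd_label n s i - 1 \<in> s ` {2*i - 1, 2*i}"
      using entries[of i] by (simp only: image_insert image_empty) blast
  qed (auto simp: odd_label_def)
  show "even_label n s permutes {1..n}"
  proof (rule block_labels_permutes[OF inj, where h = "\<lambda>v. 2*v"])
    fix i assume "i \<in> {1..n}"
    then show "even_label n s i \<in> {1..n} \<and> 2 * even_label n s i \<in> s ` {2*i - 1, 2*i}"
      using entries[of i] by (simp only: image_insert image_empty) blast
  qed (auto simp: even_label_def)
qed

lemma sorted_pair_eq:
  fixes a b c d :: nat
  shows "a < b \<Longrightarrow> c < d \<Longrightarrow> {a, b} = {c, d} \<Longrightarrow> a = c \<and> b = d"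
  by (auto simp: doubleton_eq_iff)

lemma merge_perm_labels:
  assumes "s \<in> evenperms n" "mixed_parity n s"
  shows "merge_perm n (odd_label n s) (even_label n s) = s"
proof
  fix x
  have s: "s permutes {1..2*n}" and less: "\<And>i. i \<in> {1..n} \<Longrightarrow> s (2*i - 1) < s (2*i)"
    using assms(1) by (auto simp: evenperms_def)
  let ?p = "odd_label n s" and ?q = "even_label n s"
  note perms = labels_permute[OF s assms(2)]
  have pair: "merge_perm n ?p ?q (2*i - 1) = s (2*i - 1) \<and> merge_perm n ?p ?q (2*i) = s (2*i)"
    if i: "i \<in> {1..n}" for i
  proof (rule sorted_pair_eq)
    show "merge_perm n ?p ?q (2*i - 1) < merge_perm n ?p ?q (2*i)"
      using merge_perm_pair(1)[of i n ?p ?q] i permutes_atLeastAtMost_pos[OF perms(1) i] by blast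
    show "s (2*i - 1) < s (2*i)" using less[OF i] .
    show "{merge_perm n ?p ?q (2*i - 1), merge_perm n ?p ?q (2*i)} = {s (2*i - 1), s (2*i)}"
      unfolding merge_perm_odd[OF i] merge_perm_even[OF i] entries_eq_labels(1)[OF s assms(2) i]
      by (simp add: insert_commute)
  qed
  show "merge_perm n ?p ?q x = s x"
  proof (cases "x \<in> {1..2*n}")
    case True
    then show ?thesis by (cases rule: pair_index_cases) (use pair in blast)+
  next
    case False
    then show ?thesis
      using permutes_not_in[OF merge_perm_permutes[OF perms]] permutes_not_in[OF s] by simp
  qed
qed

lemma finite_evenperms: "finite (evenperms n)"
  by (rule finite_subset[OF _ finite_permutations[of "{1..2*n}"]]) (auto simp: evenperms_def)

lemma length_concat_pairs: "length (concat (map (\<lambda>s. [f s, g s]) xs)) = 2 * length xs"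
  by (induction xs) auto

lemma nth_concat_pairs:
  "k < length xs \<Longrightarrow> concat (map (\<lambda>s. [f s, g s]) xs) ! (2*k) = f (xs ! k) \<and>
                     concat (map (\<lambda>s. [f s, g s]) xs) ! (2*k + 1) = g (xs ! k)"
  by (induction xs arbitrary: k) (auto simp: nth_Cons split: nat.split)

lemma nth_concat_pairs_upt:
  assumes "s \<in> {1..m}"
  shows "concat (map (\<lambda>s. [f s, g s]) [1..<m+1]) ! (2*s - 2) = f s \<and>
         concat (map (\<lambda>s. [f s, g s]) [1..<m+1]) ! (2*s - 1) = g s"
proof -
  have "2*s - 2 = 2*(s - 1)" "2*s - 1 = 2*(s - 1) + 1" "s - 1 < length [1..<m+1]"
    "[1..<m+1] ! (s - 1) = s"
    using assms by (auto simp del: upt_Suc)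
  then show ?thesis using nth_concat_pairs[of "s - 1" "[1..<m+1]" f g] by simp
qed

lemma list_eq_concat_pairs:
  assumes "length l = 2*m"
  shows "l = concat (map (\<lambda>s. [l ! (2*s - 2), l ! (2*s - 1)]) [1..<m+1])"
proof (rule nth_equalityI)
  show "length l = length (concat (map (\<lambda>s. [l ! (2*s - 2), l ! (2*s - 1)]) [1..<m+1]))"
    using assms by (simp add: length_concat_pairs)
next
  fix k assume "k < length l"
  define s where "s = k div 2 + 1"
  have s: "s \<in> {1..m}" using \<open>k < length l\<close> assms by (auto simp: s_def)
  have "k = 2*s - 2 \<or> k = 2*s - 1" unfolding s_def by presburger
  then show "l ! k = concat (map (\<lambda>s. [l ! (2*s - 2), l ! (2*s - 1)]) [1..<m+1]) ! k"
    using nth_concat_pairs_upt[OF s, of "\<lambda>s. l ! (2*s - 2)" "\<lambda>s. l ! (2*s - 1)"] by auto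
qed

lemma map_upt_eq_concat_pairs:
  "map h [1..<2*m+1] = concat (map (\<lambda>s. [h (2*s - 1), h (2*s)]) [1..<m+1])"
  (is "?l = _")
proof -
  have "?l = concat (map (\<lambda>s. [?l ! (2*s - 2), ?l ! (2*s - 1)]) [1..<m+1])"
    by (rule list_eq_concat_pairs) simp
  also have "\<dots> = concat (map (\<lambda>s. [h (2*s - 1), h (2*s)]) [1..<m+1])"
  proof (intro arg_cong[where f = concat] map_cong refl)
    fix s assume "s \<in> set [1..<m+1]"
    then show "[?l ! (2*s - 2), ?l ! (2*s - 1)] = [h (2*s - 1), h (2*s)]"
      by (auto simp del: upt_Suc intro!: arg_cong[where f = h])
  qed
  finally show ?thesis .
qed

lemma prod_atLeastAtMost_pairs:
  fixes m :: nat
  shows "(\<Prod>j=1..2*m. h j) = (\<Prod>s=1..m. h (2*s - 1) * h (2*s))"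
proof (induction m)
  case (Suc m)
  have "{1..2 * Suc m} = insert (2*m + 2) (insert (2*m + 1) {1..2*m})" by auto
  then show ?case using Suc by (simp add: ac_simps)
qed simp

lemma pf_array_pair_labels:
  fixes A :: "nat list \<Rightarrow> 'a::comm_ring_1"
  shows "pf_array m A l =
    (if \<forall>t<m. odd (l ! (2*t)) \<noteq> odd (l ! (2*t + 1))
     then (\<Prod>t<m. if even (l ! (2*t)) then -1 else 1) *
          A (concat (map (\<lambda>t. pair_labels (l ! (2*t)) (l ! (2*t + 1))) [0..<m]))
     else 0)"
proof -
  have "(\<Prod>t<m. if even (l ! (2*t)) then -1 else (1::'a)) = (\<Prod>t\<in>{t\<in>{..<m}. even (l ! (2*t))}. -1)"
    by (rule prod.inter_filter[symmetric]) simp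
  also have "\<dots> = (-1) ^ card {t. t < m \<and> even (l ! (2*t))}"
    by (simp add: conj_commute cong: conj_cong)
  finally have sign: "(\<Prod>t<m. if even (l ! (2*t)) then -1 else (1::'a)) =
      (-1) ^ card {t. t < m \<and> even (l ! (2*t))}" .
  show ?thesis
    unfolding pf_array_def pair_labels_def Let_def sign ..
qed

lemma pf_array_concat_pairs:
  fixes A :: "nat list \<Rightarrow> 'a::comm_ring_1"
  shows "pf_array m A (concat (map (\<lambda>s. [f s, g s]) [1..<m+1])) =
    (if \<forall>s\<in>{1..m}. odd (f s) \<noteq> odd (g s)
     then (\<Prod>s=1..m. if even (f s) then -1 else 1) *
          A (concat (map (\<lambda>s. pair_labels (f s) (g s)) [1..<m+1]))
     else 0)"
proof -
  let ?l = "concat (map (\<lambda>s. [f s, g s]) [1..<m+1])"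
  have nth: "?l ! (2*t) = f (Suc t)" "?l ! (2*t + 1) = g (Suc t)" if "t < m" for t
    using nth_concat_pairs[of t "[1..<m+1]" f g] that by (simp_all del: upt_Suc)
  have "(\<forall>t<m. odd (?l ! (2*t)) \<noteq> odd (?l ! (2*t + 1))) \<longleftrightarrow>
      (\<forall>s\<in>{1..m}. odd (f s) \<noteq> odd (g s))"
    unfolding image_Suc_lessThan[symmetric] using nth by auto
  moreover have "(\<Prod>t<m. if even (?l ! (2*t)) then -1 else 1) =
      (\<Prod>s=1..m. if even (f s) then -1 else (1::'a))"
    using nth by (simp add: prod.atLeast1_atMost_eq)
  moreover have "map (\<lambda>t. pair_labels (?l ! (2*t)) (?l ! (2*t + 1))) [0..<m] =
      map (\<lambda>s. pair_labels (f s) (g s)) [1..<m+1]"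
  proof -
    have "[1..<m+1] = map Suc [0..<m]"
      by (simp del: upt_Suc add: map_Suc_upt)
    then have "map (\<lambda>s. pair_labels (f s) (g s)) [1..<m+1] =
        map (\<lambda>t. pair_labels (f (Suc t)) (g (Suc t))) [0..<m]"
      by simp
    then show ?thesis using nth by (simp del: upt_Suc)
  qed
  ultimately show ?thesis
    unfolding pf_array_pair_labels by presburger
qed

lemma update_concat_pairs:
  assumes "r \<in> {1..m}"
  shows "(concat (map (\<lambda>s. [f s, g s]) [1..<m+1]))[2*r - 2 := g r, 2*r - 1 := f r] =
    concat (map (\<lambda>s. [(f(r := g r)) s, (g(r := f r)) s]) [1..<m+1])"
  (is "?l' = _")
proof -
  have len: "length ?l' = 2*m" by (simp add: length_concat_pairs)
  have "?l' = concat (map (\<lambda>s. [?l' ! (2*s - 2), ?l' ! (2*s - 1)]) [1..<m+1])"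
    by (rule list_eq_concat_pairs[OF len])
  also have "\<dots> = concat (map (\<lambda>s. [(f(r := g r)) s, (g(r := f r)) s]) [1..<m+1])"
  proof (intro arg_cong[where f = concat] map_cong refl)
    fix s assume "s \<in> set [1..<m+1]"
    then have "s \<in> {1..m}" by auto
    then show "[?l' ! (2*s - 2), ?l' ! (2*s - 1)] = [(f(r := g r)) s, (g(r := f r)) s]"
      using assms len nth_concat_pairs_upt[of s m f g] by (auto simp: nth_list_update)
  qed
  finally show ?thesis .
qed

lemma pf_array_swap_pair:
  fixes A :: "nat list \<Rightarrow> 'a::comm_ring_1"
  assumes r: "r \<in> {1..m}"
  shows "pf_array m A (concat (map (\<lambda>s. [(f(r := g r)) s, (g(r := f r)) s]) [1..<m+1])) =
    - pf_array m A (concat (map (\<lambda>s. [f s, g s]) [1..<m+1]))"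
proof (cases "\<forall>s\<in>{1..m}. odd (f s) \<noteq> odd (g s)")
  case True
  then have mixed: "odd (f r) \<noteq> odd (g r)" using r by blast
  have mixed': "\<forall>s\<in>{1..m}. odd ((f(r := g r)) s) \<noteq> odd ((g(r := f r)) s)"
    using True by auto
  have "(\<Prod>s=1..m. if even ((f(r := g r)) s) then -1 else 1) =
      (if even (g r) then -1 else 1) * (\<Prod>s\<in>{1..m} - {r}. if even (f s) then -1 else (1::'a))"
    using r by (simp add: prod.remove)
  also have "\<dots> = - (\<Prod>s=1..m. if even (f s) then -1 else 1)"
    using r mixed by (simp add: prod.remove)
  finally have sign: "(\<Prod>s=1..m. if even ((f(r := g r)) s) then -1 else 1) =
      - (\<Prod>s=1..m. if even (f s) then -1 else (1::'a))" .
  have labels: "map (\<lambda>s. pair_labels ((f(r := g r)) s) ((g(r := f r)) s)) [1..<m+1] =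
      map (\<lambda>s. pair_labels (f s) (g s)) [1..<m+1]"
    using pair_labels_swap[OF mixed] by auto
  show ?thesis
    unfolding pf_array_concat_pairs if_P[OF True] if_P[OF mixed'] sign labels by simp
next
  case False
  then have not_mixed': "\<not> (\<forall>s\<in>{1..m}. odd ((f(r := g r)) s) \<noteq> odd ((g(r := f r)) s))"
    by auto
  show ?thesis
    unfolding pf_array_concat_pairs if_not_P[OF False] if_not_P[OF not_mixed'] by simp
qed

lemma alternation_cond_pf_array: "alternation_cond m n (pf_array m A)"
  unfolding alternation_cond_def
proof (intro allI impI ballI)
  fix l :: "nat list" and r
  assume len: "length l = 2*m" and "set l \<subseteq> {1..2*n}" and r: "r \<in> {1..m}"
  define f where "f s = l ! (2*s - 2)" for s
  define g where "g s = l ! (2*s - 1)" for s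
  have l: "l = concat (map (\<lambda>s. [f s, g s]) [1..<m+1])"
    unfolding f_def g_def by (rule list_eq_concat_pairs[OF len])
  have "l[2*r - 2 := l ! (2*r - 1), 2*r - 1 := l ! (2*r - 2)] = l[2*r - 2 := g r, 2*r - 1 := f r]"
    by (simp only: f_def g_def)
  also have "\<dots> = concat (map (\<lambda>s. [(f(r := g r)) s, (g(r := f r)) s]) [1..<m+1])"
    by (subst l) (rule update_concat_pairs[OF r])
  finally show
    "pf_array m A (l[2*r - 2 := l ! (2*r - 1), 2*r - 1 := l ! (2*r - 2)]) = - pf_array m A l"
    using pf_array_swap_pair[OF r, of A f g] l by simp
qed

section \<open>Reindexing the hyperpfaffian\<close>

definition pf_term :: "nat \<Rightarrow> nat \<Rightarrow> (nat list \<Rightarrow> 'a::comm_ring_1) \<Rightarrow> (nat \<Rightarrow> nat \<Rightarrow> nat) \<Rightarrow> 'a" where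
  "pf_term m n B \<sigma> = (\<Prod>s=1..m. of_int (sign (\<sigma> s))) *
     (\<Prod>i=1..n. B (concat (map (\<lambda>s. [\<sigma> s (2*i - 1), \<sigma> s (2*i)]) [1..<m+1])))"

definition det_term :: "nat \<Rightarrow> nat \<Rightarrow> (nat list \<Rightarrow> 'a::comm_ring_1) \<Rightarrow> (nat \<Rightarrow> nat \<Rightarrow> nat) \<Rightarrow> 'a" where
  "det_term m n A \<tau> = (\<Prod>j=1..2*m. of_int (sign (\<tau> j))) * (\<Prod>i=1..n. A (map (\<lambda>j. \<tau> j i) [1..<2*m+1]))"

lemma hyperpf_eq_sum:
  "hyperpf m n B = 1 / fact n * (\<Sum>\<sigma> \<in> PiE {1..m} (\<lambda>_. evenperms n). pf_term m n B \<sigma>)"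
  unfolding hyperpf_def pf_term_def ..

lemma hyperdet_eq_sum:
  "hyperdet m n A = 1 / fact n * (\<Sum>\<tau> \<in> PiE {1..2*m} (\<lambda>_. {p. p permutes {1..n}}). det_term m n A \<tau>)"
  unfolding hyperdet_def det_term_def ..

definition merge_family :: "nat \<Rightarrow> nat \<Rightarrow> (nat \<Rightarrow> nat \<Rightarrow> nat) \<Rightarrow> nat \<Rightarrow> nat \<Rightarrow> nat" where
  "merge_family m n \<tau> = restrict (\<lambda>s. merge_perm n (\<tau> (2*s - 1)) (\<tau> (2*s))) {1..m}"

lemma PiE_permutes_pair:
  fixes \<tau> :: "nat \<Rightarrow> nat \<Rightarrow> nat"
  assumes "\<tau> \<in> PiE {1..2*m} (\<lambda>_. {p. p permutes {1..n}})" "s \<in> {1..m}"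
  shows "\<tau> (2*s - 1) permutes {1..n}" "\<tau> (2*s) permutes {1..n}"
proof -
  have "2*s - 1 \<in> {1..2*m}" "2*s \<in> {1..2*m}" using assms(2) by auto
  then show "\<tau> (2*s - 1) permutes {1..n}" "\<tau> (2*s) permutes {1..n}"
    using assms(1) by auto
qed

lemma merge_family_in_PiE:
  assumes "\<tau> \<in> PiE {1..2*m} (\<lambda>_. {p. p permutes {1..n}})"
  shows "merge_family m n \<tau> \<in> PiE {1..m} (\<lambda>_. evenperms n)"
  using merge_perm_in_evenperms[OF PiE_permutes_pair[OF assms]]
  by (simp add: merge_family_def)

lemma inj_on_merge_family: "inj_on (merge_family m n) (PiE {1..2*m} (\<lambda>_. {p. p permutes {1..n}}))"
proof (rule inj_onI)
  fix \<tau> \<tau>' assume \<tau>: "\<tau> \<in> PiE {1..2*m} (\<lambda>_. {p. p permutes {1..n}})"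
    and \<tau>': "\<tau>' \<in> PiE {1..2*m} (\<lambda>_. {p. p permutes {1..n}})"
    and eq: "merge_family m n \<tau> = merge_family m n \<tau>'"
  have pairs: "\<tau> (2*s - 1) = \<tau>' (2*s - 1) \<and> \<tau> (2*s) = \<tau>' (2*s)" if s: "s \<in> {1..m}" for s
  proof (rule merge_perm_inject[OF PiE_permutes_pair[OF \<tau> s] PiE_permutes_pair[OF \<tau>' s]])
    show "merge_perm n (\<tau> (2*s - 1)) (\<tau> (2*s)) = merge_perm n (\<tau>' (2*s - 1)) (\<tau>' (2*s))"
      using fun_cong[OF eq, of s] s by (simp add: merge_family_def)
  qed
  have "\<tau> j = \<tau>' j" if "j \<in> {1..2*m}" for j
    using that by (cases rule: pair_index_cases) (use pairs in auto)
  then show "\<tau> = \<tau>'"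
    by (rule PiE_ext[OF \<tau> \<tau>'])
qed

lemma merge_family_surj:
  assumes \<sigma>: "\<sigma> \<in> PiE {1..m} (\<lambda>_. evenperms n)" and mixed: "\<forall>s\<in>{1..m}. mixed_parity n (\<sigma> s)"
  shows "\<sigma> \<in> merge_family m n ` PiE {1..2*m} (\<lambda>_. {p. p permutes {1..n}})"
proof
  define \<tau> where "\<tau> j = (if j \<in> {1..2*m} then if odd j then odd_label n (\<sigma> ((j+1) div 2))
                       else even_label n (\<sigma> (j div 2)) else undefined)" for j
  have \<tau>_pair: "\<tau> (2*s - 1) = odd_label n (\<sigma> s) \<and> \<tau> (2*s) = even_label n (\<sigma> s)"
    if "s \<in> {1..m}" for s
    using that by (auto simp: \<tau>_def)
  have perms: "odd_label n (\<sigma> s) permutes {1..n} \<and> even_label n (\<sigma> s) permutes {1..n}"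
    if s: "s \<in> {1..m}" for s
  proof -
    have "\<sigma> s permutes {1..2*n}" using \<sigma> s by (auto simp: evenperms_def)
    then show ?thesis using labels_permute mixed s by blast
  qed
  show "\<tau> \<in> PiE {1..2*m} (\<lambda>_. {p. p permutes {1..n}})"
  proof (rule PiE_I)
    fix j assume "j \<in> {1..2*m}"
    then show "\<tau> j \<in> {p. p permutes {1..n}}"
      by (cases rule: pair_index_cases) (use perms \<tau>_pair in auto)
  qed (auto simp: \<tau>_def)
  then show "\<sigma> = merge_family m n \<tau>"
  proof (intro PiE_ext[OF \<sigma> merge_family_in_PiE])
    show "\<sigma> s = merge_family m n \<tau> s" if "s \<in> {1..m}" for s
      using that \<tau>_pair[OF that]
        merge_perm_labels[OF PiE_mem[OF \<sigma> that] mixed[rule_format, OF that]]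
      by (simp add: merge_family_def)
  qed
qed

lemma pf_term_pf_array_eq_0:
  fixes A :: "nat list \<Rightarrow> 'a::comm_ring_1"
  assumes "s \<in> {1..m}" "\<not> mixed_parity n (\<sigma> s)"
  shows "pf_term m n (pf_array m A) \<sigma> = 0"
proof -
  obtain i where i: "i \<in> {1..n}" "odd (\<sigma> s (2*i - 1)) = odd (\<sigma> s (2*i))"
    using assms(2) by (auto simp: mixed_parity_def)
  then have not_mixed: "\<not> (\<forall>s\<in>{1..m}. odd (\<sigma> s (2*i - 1)) \<noteq> odd (\<sigma> s (2*i)))"
    using assms(1) by blast
  have "pf_array m A (concat (map (\<lambda>s. [\<sigma> s (2*i - 1), \<sigma> s (2*i)]) [1..<m+1])) = 0"
    unfolding pf_array_concat_pairs if_not_P[OF not_mixed] ..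
  then have "(\<Prod>i=1..n. pf_array m A (concat (map (\<lambda>s. [\<sigma> s (2*i - 1), \<sigma> s (2*i)]) [1..<m+1]))) = 0"
    using i(1) by (intro prod_zero) auto
  then show ?thesis by (simp add: pf_term_def)
qed

lemma pf_array_merge_family_column:
  fixes A :: "nat list \<Rightarrow> 'a::comm_ring_1"
  assumes \<tau>: "\<tau> \<in> PiE {1..2*m} (\<lambda>_. {p. p permutes {1..n}})" and i: "i \<in> {1..n}"
  shows "pf_array m A (concat (map (\<lambda>s. [merge_family m n \<tau> s (2*i - 1),
                                          merge_family m n \<tau> s (2*i)]) [1..<m+1])) =
    (\<Prod>s=1..m. if \<tau> (2*s) i < \<tau> (2*s - 1) i then -1 else 1) * A (map (\<lambda>j. \<tau> j i) [1..<2*m+1])"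
proof -
  let ?M = "\<lambda>s. merge_perm n (\<tau> (2*s - 1)) (\<tau> (2*s))"
  have pair: "odd (?M s (2*i - 1)) \<noteq> odd (?M s (2*i)) \<and>
      (even (?M s (2*i - 1)) \<longleftrightarrow> \<tau> (2*s) i < \<tau> (2*s - 1) i) \<and>
      pair_labels (?M s (2*i - 1)) (?M s (2*i)) = [\<tau> (2*s - 1) i, \<tau> (2*s) i]"
    if "s \<in> {1..m}" for s
    using merge_perm_pair(2-4)[of i n "\<tau> (2*s - 1)" "\<tau> (2*s)"] i
      permutes_atLeastAtMost_pos[OF PiE_permutes_pair(1)[OF \<tau> that] i] by blast
  have columns: "map (\<lambda>s. [merge_family m n \<tau> s (2*i - 1), merge_family m n \<tau> s (2*i)]) [1..<m+1] =
      map (\<lambda>s. [?M s (2*i - 1), ?M s (2*i)]) [1..<m+1]"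
    by (intro map_cong refl) (simp add: merge_family_def del: upt_Suc)
  have mixed: "\<forall>s\<in>{1..m}. odd (?M s (2*i - 1)) \<noteq> odd (?M s (2*i))"
    using pair by blast
  have sign: "(\<Prod>s=1..m. if even (?M s (2*i - 1)) then -1 else 1) =
      (\<Prod>s=1..m. if \<tau> (2*s) i < \<tau> (2*s - 1) i then -1 else (1::'a))"
    using pair by (intro prod.cong) auto
  have labels: "map (\<lambda>s. pair_labels (?M s (2*i - 1)) (?M s (2*i))) [1..<m+1] =
      map (\<lambda>s. [\<tau> (2*s - 1) i, \<tau> (2*s) i]) [1..<m+1]"
    using pair by (intro map_cong refl) (auto simp del: upt_Suc)
  show ?thesis
    unfolding columns pf_array_concat_pairs if_P[OF mixed] sign labels map_upt_eq_concat_pairs ..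
qed

lemma pf_term_merge_family:
  fixes A :: "nat list \<Rightarrow> 'a::comm_ring_1"
  assumes \<tau>: "\<tau> \<in> PiE {1..2*m} (\<lambda>_. {p. p permutes {1..n}})"
  shows "pf_term m n (pf_array m A) (merge_family m n \<tau>) = det_term m n A \<tau>"
proof -
  let ?c = "\<lambda>s i. if \<tau> (2*s) i < \<tau> (2*s - 1) i then -1 else (1::'a)"
  let ?A = "\<Prod>i=1..n. A (map (\<lambda>j. \<tau> j i) [1..<2*m+1])"
  have signs: "(\<Prod>s=1..m. of_int (sign (merge_family m n \<tau> s)) * (\<Prod>i=1..n. ?c s i)) =
      (\<Prod>s=1..m. of_int (sign (\<tau> (2*s - 1))) * of_int (sign (\<tau> (2*s))))"
    using sign_merge_perm_cancel[OF PiE_permutes_pair[OF \<tau>]]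
    by (intro prod.cong refl) (simp add: merge_family_def)
  have columns: "(\<Prod>i=1..n. pf_array m A (concat (map (\<lambda>s. [merge_family m n \<tau> s (2*i - 1),
                                                  merge_family m n \<tau> s (2*i)]) [1..<m+1]))) =
      (\<Prod>i=1..n. (\<Prod>s=1..m. ?c s i) * A (map (\<lambda>j. \<tau> j i) [1..<2*m+1]))"
    by (rule prod.cong[OF refl pf_array_merge_family_column[OF \<tau>]])
  have "pf_term m n (pf_array m A) (merge_family m n \<tau>) =
      (\<Prod>s=1..m. of_int (sign (merge_family m n \<tau> s))) * ((\<Prod>i=1..n. \<Prod>s=1..m. ?c s i) * ?A)"
    unfolding pf_term_def columns prod.distrib ..
  also have "\<dots> = (\<Prod>s=1..m. of_int (sign (merge_family m n \<tau> s))) *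
      ((\<Prod>s=1..m. \<Prod>i=1..n. ?c s i) * ?A)"
    by (subst prod.swap) (rule refl)
  also have "\<dots> = (\<Prod>s=1..m. of_int (sign (\<tau> (2*s - 1))) * of_int (sign (\<tau> (2*s)))) * ?A"
    unfolding signs[symmetric] by (simp only: prod.distrib mult.assoc)
  also have "\<dots> = det_term m n A \<tau>"
    unfolding det_term_def prod_atLeastAtMost_pairs ..
  finally show ?thesis .
qed

theorem proposition2p2:
  fixes m n :: nat and A :: "nat list \<Rightarrow> 'a::field_char_0"
  assumes "0 < m" and "0 < n"
  shows "alternation_cond m n (pf_array m A) \<and> hyperpf m n (pf_array m A) = hyperdet m n A"
proof
  show "alternation_cond m n (pf_array m A)" by (rule alternation_cond_pf_array)
next
  let ?D = "PiE {1..2*m} (\<lambda>_. {p. p permutes {1..n}})" and ?E = "PiE {1..m} (\<lambda>_. evenperms n)"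
  let ?F = "pf_term m n (pf_array m A)"
  have "sum ?F ?E = sum ?F (merge_family m n ` ?D)"
  proof (rule sum.mono_neutral_right)
    show "finite ?E" by (simp add: finite_PiE finite_evenperms)
    show "merge_family m n ` ?D \<subseteq> ?E" using merge_family_in_PiE by blast
    show "\<forall>\<sigma> \<in> ?E - merge_family m n ` ?D. ?F \<sigma> = 0"
      using merge_family_surj pf_term_pf_array_eq_0 by blast
  qed
  also have "\<dots> = sum (?F \<circ> merge_family m n) ?D"
    by (rule sum.reindex[OF inj_on_merge_family])
  also have "\<dots> = sum (det_term m n A) ?D"
    by (rule sum.cong) (simp_all add: pf_term_merge_family)
  finally show "hyperpf m n (pf_array m A) = hyperdet m n A"
    unfolding hyperpf_eq_sum hyperdet_eq_sum by simp
qed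

end
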